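(* The monad $\mathbb M^\bullet_\cup=(M_\cup,\eta,\mu^\bullet)$ is an IL-monad. More precisely, let $\xi:M_\cup I\to I$ be defined by $\xi(\nu)=\max\{\nu([t,1])\cdot t: t\in(0,1]\}$. Then $(I,\xi)$ is an $\mathbb M^\bullet_\cup$-algebra, and for every compactum $X$ the family of maps $\{\xi\circ M_\cup\varphi: M_\cup X\to I \mid \varphi\in C(X,I)\}$ consists of $\mathbb M^\bullet_\cup$-algebra morphisms $(M_\cup X,\mu^\bullet X)\to(I,\xi)$ and separates the points of $M_\cup X$.
   Context: A compactum is a compact Hausdorff space; $I=[0,1]$; $C(X,I)$ is the set of continuous maps $X\to I$. An (upper-semicontinuous) capacity on a compactum $X$ is a function $\nu$ from the closed subsets of $X$ to $I$ such that: (1) $\nu(X)=1$, $\nu(\emptyset)=0$; (2) if $F\subset G$ then $\nu(F)\le\nu(G)$; (3) if $\nu(F)<a$ then there is an open set $O\supset F$ with $\nu(B)<a$ for every closed $B\subset O$. $MX$ is the set of all capacities on $X$, topologized by the subbase of sets $\{c: c(F)<a\}$ ($F$ closed, $a\in I$) and $\{c: c(U)>a\}$ ($U$ open, $a\in I$), where $c(U)=\sup\{c(K):K\text{ closed},K\subset U\}$. A possibility capacity is one with $\nu(A\cup B)=\max\{\nu(A),\nu(B)\}$ for all closed $A,B$; $M_\cup X\subset MX$ is the (closed) subspace of possibility capacities. For continuous $f:X\to Y$, $M_\cup f(c)(F)=c(f^{-1}(F))$. $\eta X(x)(F)=1$ if $x\in F$, $0$ otherwise. For closed $F\subset X$ and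 $t\in I$, $F_t=\{c\in M_\cup X: c(F)\ge t\}$, and $\mu^\bullet X:M_\cup(M_\cup X)\to M_\cup X$ is $\mu^\bullet X(\mathcal C)(F)=\max\{\mathcal C(F_t)\cdot t: t\in(0,1]\}$; $(M_\cup,\eta,\mu^\bullet)$ is a monad on the category of compacta. For a monad $\mathbb T=(T,\eta,\mu)$, a $\mathbb T$-algebra is a pair $(X,\xi)$ with $\xi:TX\to X$ continuous, $\xi\circ\eta X=\mathrm{id}_X$ and $\xi\circ\mu X=\xi\circ T\xi$; a map $f:X\to Y$ is a morphism of $\mathbb T$-algebras $(X,\xi)\to(Y,\xi')$ if $\xi'\circ Tf=f\circ\xi$. (For each $X$, $(TX,\mu X)$ is a $\mathbb T$-algebra.) A monad $\mathbb T$ on compacta is an IL-monad if there is $\xi:TI\to I$ with $(I,\xi)$ a $\mathbb T$-algebra such that for every compactum $X$ there is a point-separating family of $\mathbb T$-algebra morphisms $(TX,\mu X)\to(I,\xi)$. *)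

theory Defs
  imports "HOL-Analysis.Analysis"
begin

text \<open>Capacities on a space X are represented as functions on all subsets of the
carrier type, taking their meaningful values on closed sets and (by convention)
the value 0 on non-closed sets, so that a capacity is uniquely represented.\<close>

definition compactum :: "'a topology \<Rightarrow> bool" where
  "compactum X \<longleftrightarrow> compact_space X \<and> Hausdorff_space X"

definition unit_interval :: "real topology" where
  "unit_interval = subtopology euclideanreal {0..1}"

definition capacity :: "'a topology \<Rightarrow> ('a set \<Rightarrow> real) \<Rightarrow> bool" where
  "capacity X c \<longleftrightarrow>
     (\<forall>F. \<not> closedin X F \<longrightarrow> c F = 0) \<and>
     (\<forall>F. closedin X F \<longrightarrow> 0 \<le> c F \<and> c F \<le> 1) \<and>
     c (topspace X) = 1 \<and> c {} = 0 \<and>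
     (\<forall>F G. closedin X F \<and> closedin X G \<and> F \<subseteq> G \<longrightarrow> c F \<le> c G) \<and>
     (\<forall>F a. closedin X F \<and> c F < a \<longrightarrow>
        (\<exists>W. openin X W \<and> F \<subseteq> W \<and> (\<forall>B. closedin X B \<and> B \<subseteq> W \<longrightarrow> c B < a)))"

definition possibility_capacity :: "'a topology \<Rightarrow> ('a set \<Rightarrow> real) \<Rightarrow> bool" where
  "possibility_capacity X c \<longleftrightarrow> capacity X c \<and>
     (\<forall>A B. closedin X A \<and> closedin X B \<longrightarrow> c (A \<union> B) = max (c A) (c B))"

definition cap_open :: "'a topology \<Rightarrow> ('a set \<Rightarrow> real) \<Rightarrow> 'a set \<Rightarrow> real" where
  "cap_open X c U = Sup {c K | K. closedin X K \<and> K \<subseteq> U}"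

definition M_top :: "'a topology \<Rightarrow> ('a set \<Rightarrow> real) topology" where
  "M_top X = topology_generated_by
     ({{c. capacity X c \<and> c F < a} | F a. closedin X F \<and> a \<in> {0..1}} \<union>
      {{c. capacity X c \<and> cap_open X c U > a} | U a. openin X U \<and> a \<in> {0..1}})"

definition MU_top :: "'a topology \<Rightarrow> ('a set \<Rightarrow> real) topology" where
  "MU_top X = subtopology (M_top X) {c. possibility_capacity X c}"

definition MU_map :: "'a topology \<Rightarrow> 'b topology \<Rightarrow> ('a \<Rightarrow> 'b)
                       \<Rightarrow> ('a set \<Rightarrow> real) \<Rightarrow> ('b set \<Rightarrow> real)" where
  "MU_map X Y f c = (\<lambda>F. if closedin Y F then c (f -` F \<inter> topspace X) else 0)"

definition MU_eta :: "'a topology \<Rightarrow> 'a \<Rightarrow> ('a set \<Rightarrow> real)" where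
  "MU_eta X x = (\<lambda>F. if closedin X F \<and> x \<in> F then 1 else 0)"

definition level_set :: "'a topology \<Rightarrow> 'a set \<Rightarrow> real \<Rightarrow> ('a set \<Rightarrow> real) set" where
  "level_set X F t = {c \<in> topspace (MU_top X). c F \<ge> t}"

definition MU_mu :: "'a topology \<Rightarrow> (('a set \<Rightarrow> real) set \<Rightarrow> real) \<Rightarrow> ('a set \<Rightarrow> real)" where
  "MU_mu X C = (\<lambda>F. if closedin X F
                     then Sup {C (level_set X F t) * t | t. t \<in> {0<..1}} else 0)"

definition xi :: "(real set \<Rightarrow> real) \<Rightarrow> real" where
  "xi \<nu> = Sup {\<nu> {t..1} * t | t. t \<in> {0<..1}}"

end

theory Submission
  imports Defs
begin

text \<open>For \<open>\<phi> \<in> C(X,I)\<close> the map \<open>\<xi> \<circ> M\<^sub>\<union>\<phi>\<close> is the Shilkret integral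
\<open>c \<mapsto> sup\<^sub>t t \<cdot> c(\<phi> \<ge> t)\<close>, and \<open>\<xi>\<close> is the Shilkret integral of the identity of \<open>I\<close>. So
everything reduces to three properties of this integral. It is continuous in \<open>c\<close>: lower
semicontinuity comes from the subbasic open sets \<open>c(U) > a\<close> for \<open>U = {\<phi> > s}\<close>, upper
semicontinuity from controlling \<open>c\<close> on the finite grid of levels \<open>k/N\<close>. It satisfies the
Fubini-type identity \<open>\<integral>(\<integral>\<phi> dc) d\<C>(c) = \<integral>\<phi> d\<mu>(\<C>)\<close>: the nontrivial inequality covers
\<open>{c. \<integral>\<phi> dc \<ge> r}\<close> by finitely many of the sets \<open>F\<^sub>t\<close> and uses that \<open>\<C>\<close> is maxitive. And it
separates capacities on a normal space: if \<open>c(F) < a < d(F)\<close>, an Urysohn function that is 1 on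
\<open>F\<close> and vanishes outside a neighbourhood of \<open>F\<close> on whose closed subsets \<open>c < a\<close> has integral
at most \<open>a\<close> for \<open>c\<close> and at least \<open>d(F)\<close> for \<open>d\<close>.\<close>

lemma capacity_le_one: "capacity X c \<Longrightarrow> c F \<le> 1"
  unfolding capacity_def by (cases "closedin X F") auto

lemma capacity_nonneg: "capacity X c \<Longrightarrow> 0 \<le> c F"
  unfolding capacity_def by (cases "closedin X F") auto

lemma capacity_mono: "capacity X c \<Longrightarrow> closedin X F \<Longrightarrow> closedin X G \<Longrightarrow> F \<subseteq> G \<Longrightarrow> c F \<le> c G"
  unfolding capacity_def by blast

lemma capacity_empty: "capacity X c \<Longrightarrow> c {} = 0"
  unfolding capacity_def by blast

lemma capacity_upper_semicontinuous:
  "capacity X c \<Longrightarrow> closedin X F \<Longrightarrow> c F < a \<Longrightarrow>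
     \<exists>W. openin X W \<and> F \<subseteq> W \<and> (\<forall>B. closedin X B \<and> B \<subseteq> W \<longrightarrow> c B < a)"
  by (simp add: capacity_def)

lemma le_cap_open:
  assumes "capacity X c" "closedin X K" "K \<subseteq> U"
  shows "c K \<le> cap_open X c U"
  unfolding cap_open_def
  by (rule cSup_upper) (use assms capacity_le_one in \<open>auto intro!: bdd_aboveI[where M=1]\<close>)

lemma cap_open_le:
  assumes "capacity X c" "closedin X G" "U \<subseteq> G"
  shows "cap_open X c U \<le> c G"
  unfolding cap_open_def
proof (rule cSup_least)
  show "{c K |K. closedin X K \<and> K \<subseteq> U} \<noteq> {}" by blast
  show "x \<le> c G" if "x \<in> {c K |K. closedin X K \<and> K \<subseteq> U}" for x
    using that assms capacity_mono[OF assms(1)] by blast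
qed

lemma topspace_M_top: "topspace (M_top X) = {c. capacity X c}"
proof -
  have basic: "{c. capacity X c \<and> c {} < 1} \<in>
                 {{c. capacity X c \<and> c F < a} | F a. closedin X F \<and> a \<in> {0..1}}"
    by (rule CollectI, rule exI[of _ "{}"], rule exI[of _ 1]) auto
  have "c \<in> topspace (M_top X)" if "capacity X c" for c
  proof -
    have "c \<in> {c. capacity X c \<and> c {} < 1}" using that by (simp add: capacity_empty)
    then show ?thesis
      using basic unfolding M_top_def topology_generated_by_topspace by blast
  qed
  moreover have "topspace (M_top X) \<subseteq> {c. capacity X c}"
    unfolding M_top_def topology_generated_by_topspace by blast
  ultimately show ?thesis by blast
qed

lemma topspace_MU_top: "topspace (MU_top X) = {c. possibility_capacity X c}"
  unfolding MU_top_def by (auto simp: topspace_M_top possibility_capacity_def)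

lemma in_MU_top_imp_capacity: "c \<in> topspace (MU_top X) \<Longrightarrow> capacity X c"
  by (simp add: topspace_MU_top possibility_capacity_def)

lemma openin_M_top_less:
  assumes "closedin X F"
  shows "openin (M_top X) {c \<in> topspace (M_top X). c F < a}"
proof -
  consider "1 < a" | "a < 0" | "a \<in> {0..1}" by fastforce
  then show ?thesis
  proof cases
    case 1
    then have "{c \<in> topspace (M_top X). c F < a} = topspace (M_top X)"
      by (auto simp: topspace_M_top intro: le_less_trans[OF capacity_le_one])
    then show ?thesis by (metis openin_topspace)
  next
    case 2
    then have "{c \<in> topspace (M_top X). c F < a} = {}"
      by (auto simp: topspace_M_top dest: capacity_nonneg[where F=F])
    then show ?thesis by (metis openin_empty)
  next
    case 3
    have "{c. capacity X c \<and> c F < a} \<in>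
            {{c. capacity X c \<and> c F < a} | F a. closedin X F \<and> a \<in> {0..1}}"
      using assms 3 by blast
    then have "openin (M_top X) {c. capacity X c \<and> c F < a}"
      unfolding M_top_def by (blast intro: topology_generated_by_Basis)
    then show ?thesis by (simp add: topspace_M_top)
  qed
qed

lemma openin_M_top_cap_open_greater:
  assumes "openin X U"
  shows "openin (M_top X) {c \<in> topspace (M_top X). a < cap_open X c U}"
proof -
  have bounds: "0 \<le> cap_open X c U" "cap_open X c U \<le> 1" if "capacity X c" for c
    using le_cap_open[OF that closedin_empty] cap_open_le[OF that closedin_topspace]
      openin_subset[OF assms] that by (auto simp: capacity_def)
  consider "1 \<le> a" | "a < 0" | "a \<in> {0..1}" by fastforce
  then show ?thesis
  proof cases
    case 1
    then have "{c \<in> topspace (M_top X). a < cap_open X c U} = {}"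
      using bounds by (fastforce simp: topspace_M_top)
    then show ?thesis by (metis openin_empty)
  next
    case 2
    then have "{c \<in> topspace (M_top X). a < cap_open X c U} = topspace (M_top X)"
      using bounds by (fastforce simp: topspace_M_top)
    then show ?thesis by (metis openin_topspace)
  next
    case 3
    have "{c. capacity X c \<and> a < cap_open X c U} \<in>
            {{c. capacity X c \<and> cap_open X c U > a} | U a. openin X U \<and> a \<in> {0..1}}"
      using assms 3 by blast
    then have "openin (M_top X) {c. capacity X c \<and> a < cap_open X c U}"
      unfolding M_top_def by (blast intro: topology_generated_by_Basis)
    then show ?thesis by (simp add: topspace_M_top)
  qed
qed

lemma closedin_level_set:
  assumes "closedin X F"
  shows "closedin (MU_top X) (level_set X F t)"
proof -
  have "openin (MU_top X) ({c \<in> topspace (M_top X). c F < t} \<inter> {c. possibility_capacity X c})"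
    unfolding MU_top_def by (rule openin_subtopology_Int[OF openin_M_top_less[OF assms]])
  moreover have "{c \<in> topspace (M_top X). c F < t} \<inter> {c. possibility_capacity X c}
                   = topspace (MU_top X) - level_set X F t"
    by (auto simp: level_set_def topspace_MU_top topspace_M_top possibility_capacity_def)
  ultimately show ?thesis
    by (simp add: closedin_def level_set_def)
qed

lemma SUP_Ioc_least:
  "(\<And>t. t \<in> {0<..1} \<Longrightarrow> f t \<le> (B::real)) \<Longrightarrow> (SUP t\<in>{0<..1::real}. f t) \<le> B"
  by (rule cSUP_least) auto

lemma SUP_Ioc_upper:
  "(\<And>t. t \<in> {0<..1} \<Longrightarrow> f t \<le> (B::real)) \<Longrightarrow> t \<in> {0<..1::real} \<Longrightarrow>
     f t \<le> (SUP t\<in>{0<..1}. f t)"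
  by (rule cSUP_upper) (auto intro!: bdd_aboveI2[where M=B])

lemma less_SUP_Ioc: "(B::real) < (SUP t\<in>{0<..1::real}. f t) \<Longrightarrow> \<exists>t\<in>{0<..1}. B < f t"
  by (meson SUP_Ioc_least not_le)

lemma ex_nat_divide_less: "0 < (e::real) \<Longrightarrow> \<exists>N::nat. 0 < N \<and> c / real N < e"
proof -
  assume "0 < e"
  obtain n :: nat where "c / e < real n"
    using reals_Archimedean2 by blast
  then have "c < real (Suc n) * e"
    using \<open>0 < e\<close> by (simp add: pos_divide_less_eq distrib_right)
  then show ?thesis
    by (intro exI[of _ "Suc n"]) (simp add: pos_divide_less_eq mult.commute)
qed

lemma mult_le_one_if_le_one: "(x::real) \<le> 1 \<Longrightarrow> t \<in> {0<..1} \<Longrightarrow> x * t \<le> 1"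
  by (cases "0 \<le> x") (auto simp: mult_le_one mult_nonpos_nonneg)

definition superlevel :: "'a topology \<Rightarrow> ('a \<Rightarrow> real) \<Rightarrow> real \<Rightarrow> 'a set" where
  "superlevel X \<phi> t = {x \<in> topspace X. t \<le> \<phi> x}"

definition shilkret_integral :: "'a topology \<Rightarrow> ('a \<Rightarrow> real) \<Rightarrow> ('a set \<Rightarrow> real) \<Rightarrow> real" where
  "shilkret_integral X \<phi> c = (SUP t\<in>{0<..1}. c (superlevel X \<phi> t) * t)"

lemma superlevel_antimono: "s \<le> t \<Longrightarrow> superlevel X \<phi> t \<subseteq> superlevel X \<phi> s"
  unfolding superlevel_def by auto

lemma closedin_superlevel:
  assumes "continuous_map X unit_interval \<phi>"
  shows "closedin X (superlevel X \<phi> t)"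
proof -
  have "continuous_map X euclideanreal \<phi>"
    using assms continuous_map_in_subtopology unfolding unit_interval_def by blast
  then have "closedin X {x \<in> topspace X. \<phi> x \<in> {t..}}"
    by (rule closedin_continuous_map_preimage) simp
  then show ?thesis by (simp add: superlevel_def)
qed

lemma shilkret_integral_le:
  "(\<And>t. t \<in> {0<..1} \<Longrightarrow> c (superlevel X \<phi> t) * t \<le> B) \<Longrightarrow> shilkret_integral X \<phi> c \<le> B"
  unfolding shilkret_integral_def by (rule SUP_Ioc_least)

lemma le_shilkret_integral:
  "(\<And>F. c F \<le> 1) \<Longrightarrow> t \<in> {0<..1} \<Longrightarrow> c (superlevel X \<phi> t) * t \<le> shilkret_integral X \<phi> c"
  unfolding shilkret_integral_def by (rule SUP_Ioc_upper[where B=1]) (auto intro: mult_le_one_if_le_one)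

lemma less_shilkret_integral:
  "B < shilkret_integral X \<phi> c \<Longrightarrow> \<exists>t\<in>{0<..1}. B < c (superlevel X \<phi> t) * t"
  unfolding shilkret_integral_def by (rule less_SUP_Ioc)

lemma shilkret_integral_bounds:
  assumes "capacity X c"
  shows "0 \<le> shilkret_integral X \<phi> c" "shilkret_integral X \<phi> c \<le> 1"
proof -
  have "c (superlevel X \<phi> 1) * 1 \<le> shilkret_integral X \<phi> c"
    by (intro le_shilkret_integral capacity_le_one[OF assms]) auto
  then show "0 \<le> shilkret_integral X \<phi> c"
    using capacity_nonneg[OF assms, of "superlevel X \<phi> 1"] by simp
  show "shilkret_integral X \<phi> c \<le> 1"
    using assms by (auto intro: shilkret_integral_le mult_le_one_if_le_one capacity_le_one)
qed

lemma MU_map_atLeastAtMost: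
  assumes "continuous_map X unit_interval \<phi>" "0 \<le> t"
  shows "MU_map X unit_interval \<phi> c {t..1} = c (superlevel X \<phi> t)"
proof -
  have "closedin unit_interval {t..1}"
    unfolding unit_interval_def using assms(2) by (intro closed_subset) auto
  moreover have "\<phi> -` {t..1} \<inter> topspace X = superlevel X \<phi> t"
    using continuous_map_image_subset_topspace[OF assms(1)]
    by (auto simp: superlevel_def unit_interval_def)
  ultimately show ?thesis
    by (simp add: MU_map_def)
qed

lemma xi_comp_MU_map:
  assumes "continuous_map X unit_interval \<phi>"
  shows "xi \<circ> MU_map X unit_interval \<phi> = shilkret_integral X \<phi>"
proof
  fix c
  have "(\<lambda>t. MU_map X unit_interval \<phi> c {t..1} * t) ` {0<..1}
          = (\<lambda>t. c (superlevel X \<phi> t) * t) ` {0<..1}"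
    using MU_map_atLeastAtMost[OF assms] by (intro image_cong) auto
  then show "(xi \<circ> MU_map X unit_interval \<phi>) c = shilkret_integral X \<phi> c"
    by (simp only: comp_def xi_def shilkret_integral_def Setcompr_eq_image)
qed

lemma openin_shilkret_integral_greater:
  assumes \<phi>: "continuous_map X unit_interval \<phi>"
  shows "openin (M_top X) {c \<in> topspace (M_top X). a < shilkret_integral X \<phi> c}"
proof (subst openin_subopen, intro ballI)
  fix c assume c: "c \<in> {c \<in> topspace (M_top X). a < shilkret_integral X \<phi> c}"
  then obtain t where t: "t \<in> {0<..1}" "a < c (superlevel X \<phi> t) * t"
    using less_shilkret_integral by blast
  have "((\<lambda>s. c (superlevel X \<phi> t) * s) \<longlongrightarrow> c (superlevel X \<phi> t) * t) (at_left t)"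
    by (intro tendsto_intros)
  then have "\<forall>\<^sub>F s in at_left t. a < c (superlevel X \<phi> t) * s"
    using t(2) by (rule order_tendstoD(1))
  moreover have "\<forall>\<^sub>F s in at_left t. s \<in> {0<..<t}"
    using t(1) by (intro eventually_at_left_real) simp
  ultimately have "\<exists>s. a < c (superlevel X \<phi> t) * s \<and> s \<in> {0<..<t}"
    by (intro eventually_happens'[OF trivial_limit_at_left_real] eventually_conj)
  then obtain s where s: "0 < s" "s < t" "a < c (superlevel X \<phi> t) * s"
    by auto
  define U where "U = {x \<in> topspace X. \<phi> x \<in> {s<..}}"
  have "continuous_map X euclideanreal \<phi>"
    using \<phi> continuous_map_in_subtopology unfolding unit_interval_def by blast
  then have "openin X U"
    unfolding U_def by (rule openin_continuous_map_preimage) simp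
  have sub: "superlevel X \<phi> t \<subseteq> U" "U \<subseteq> superlevel X \<phi> s"
    using s by (auto simp: superlevel_def U_def)
  show "\<exists>T. openin (M_top X) T \<and> c \<in> T \<and> T \<subseteq> {c \<in> topspace (M_top X). a < shilkret_integral X \<phi> c}"
  proof (intro exI conjI)
    let ?T = "{d \<in> topspace (M_top X). a / s < cap_open X d U}"
    show "openin (M_top X) ?T"
      by (rule openin_M_top_cap_open_greater[OF \<open>openin X U\<close>])
    have "c (superlevel X \<phi> t) \<le> cap_open X c U"
      using c sub by (intro le_cap_open closedin_superlevel[OF \<phi>]) (auto simp: topspace_M_top)
    then have "a < cap_open X c U * s"
      using s by (meson less_le_trans less_imp_le mult_right_mono)
    then show "c \<in> ?T"
      using c s by (simp add: pos_divide_less_eq)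
    show "?T \<subseteq> {c \<in> topspace (M_top X). a < shilkret_integral X \<phi> c}"
    proof safe
      fix d assume d: "d \<in> topspace (M_top X)" "a / s < cap_open X d U"
      then have "capacity X d" by (simp add: topspace_M_top)
      have "a < cap_open X d U * s"
        using d s by (simp add: pos_divide_less_eq)
      also have "\<dots> \<le> d (superlevel X \<phi> s) * s"
        using s sub by (intro mult_right_mono cap_open_le[OF \<open>capacity X d\<close>] closedin_superlevel[OF \<phi>]) auto
      also have "\<dots> \<le> shilkret_integral X \<phi> d"
        using s t by (intro le_shilkret_integral capacity_le_one[OF \<open>capacity X d\<close>]) auto
      finally show "a < shilkret_integral X \<phi> d" .
    qed
  qed
qed

lemma shilkret_integral_le_grid:
  assumes \<phi>: "continuous_map X unit_interval \<phi>" and c: "capacity X c" and N: "0 < N"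
    and grid: "\<And>k. k \<in> {1..N} \<Longrightarrow> c (superlevel X \<phi> (real k / real N)) * (real k / real N) \<le> b"
  shows "shilkret_integral X \<phi> c \<le> b + 1 / real N"
proof (rule shilkret_integral_le)
  fix t :: real assume t: "t \<in> {0<..1}"
  let ?c = "\<lambda>t. c (superlevel X \<phi> t)"
  define k where "k = nat \<lfloor>t * real N\<rfloor>"
  have k: "real k \<le> t * real N" "t * real N < real k + 1"
    using t N by (auto simp: k_def of_nat_nat)
  have "t * real N \<le> real N"
    using t by (simp add: mult_left_le_one_le)
  then have "k \<le> N"
    using k(1) by simp
  have lo: "real k / real N \<le> t" and hi: "t - real k / real N < 1 / real N"
    using k N by (simp_all add: pos_divide_le_eq pos_less_divide_eq left_diff_distrib)
  have "0 \<le> b"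
    using grid[of N] N capacity_nonneg[OF c, of "superlevel X \<phi> 1"] by simp
  have "?c t * (t - real k / real N) \<le> t - real k / real N"
    using lo capacity_nonneg[OF c] capacity_le_one[OF c] by (intro mult_left_le_one_le) auto
  moreover have "?c t * (real k / real N) \<le> b"
  proof (cases "k = 0")
    case True
    then show ?thesis using \<open>0 \<le> b\<close> by simp
  next
    case False
    have "?c t * (real k / real N) \<le> ?c (real k / real N) * (real k / real N)"
      using lo by (intro mult_right_mono capacity_mono[OF c] closedin_superlevel[OF \<phi>]
          superlevel_antimono) auto
    also have "\<dots> \<le> b"
      using False \<open>k \<le> N\<close> by (intro grid) auto
    finally show ?thesis .
  qed
  ultimately show "?c t * t \<le> b + 1 / real N"
    using hi by (simp add: right_diff_distrib)
qed

lemma openin_shilkret_integral_less: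
  assumes \<phi>: "continuous_map X unit_interval \<phi>"
  shows "openin (M_top X) {c \<in> topspace (M_top X). shilkret_integral X \<phi> c < a}"
proof (subst openin_subopen, intro ballI)
  fix c assume c: "c \<in> {c \<in> topspace (M_top X). shilkret_integral X \<phi> c < a}"
  then have "capacity X c" by (simp add: topspace_M_top)
  define m where "m = shilkret_integral X \<phi> c"
  obtain N :: nat where N: "0 < N" "2 / real N < a - m"
    using ex_nat_divide_less[of "a - m"] c by (auto simp: m_def)
  let ?p = "\<lambda>k. real k / real N"
  have scaled: "y < (m + 1 / real N) / ?p k \<longleftrightarrow> y * ?p k < m + 1 / real N"
    if "k \<in> {1..N}" for y k
    using that N by (intro pos_less_divide_eq) auto
  define T where "T = (\<Inter>k\<in>{1..N}.
     {d \<in> topspace (M_top X). d (superlevel X \<phi> (?p k)) < (m + 1 / real N) / ?p k}) \<inter> topspace (M_top X)"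
  show "\<exists>T. openin (M_top X) T \<and> c \<in> T \<and> T \<subseteq> {c \<in> topspace (M_top X). shilkret_integral X \<phi> c < a}"
  proof (intro exI conjI)
    show "openin (M_top X) T"
      unfolding T_def by (rule openin_INT) (auto intro: openin_M_top_less[OF closedin_superlevel[OF \<phi>]])
    have "c (superlevel X \<phi> (?p k)) * ?p k < m + 1 / real N" if "k \<in> {1..N}" for k
    proof -
      have "c (superlevel X \<phi> (?p k)) * ?p k \<le> m"
        unfolding m_def using that N
        by (intro le_shilkret_integral capacity_le_one[OF \<open>capacity X c\<close>]) auto
      moreover have "0 < 1 / real N"
        using N by simp
      ultimately show ?thesis by linarith
    qed
    then show "c \<in> T"
      unfolding T_def using c scaled by blast
    show "T \<subseteq> {c \<in> topspace (M_top X). shilkret_integral X \<phi> c < a}"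
    proof safe
      fix d assume d: "d \<in> T"
      then have "capacity X d" by (simp add: T_def topspace_M_top)
      show "d \<in> topspace (M_top X)" using d by (simp add: T_def)
      have "d (superlevel X \<phi> (?p k)) * ?p k \<le> m + 1 / real N" if "k \<in> {1..N}" for k
        using d that scaled unfolding T_def by (blast intro: less_imp_le)
      then have "shilkret_integral X \<phi> d \<le> m + 1 / real N + 1 / real N"
        by (rule shilkret_integral_le_grid[OF \<phi> \<open>capacity X d\<close> N(1)])
      then show "shilkret_integral X \<phi> d < a"
        using N(2) by simp
    qed
  qed
qed

lemma continuous_map_shilkret_integral:
  assumes \<phi>: "continuous_map X unit_interval \<phi>"
  shows "continuous_map (M_top X) unit_interval (shilkret_integral X \<phi>)"
  unfolding unit_interval_def continuous_map_upper_lower_semicontinuous_lt_gen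
  using shilkret_integral_bounds openin_shilkret_integral_greater[OF \<phi>]
    openin_shilkret_integral_less[OF \<phi>]
  by (auto simp: topspace_M_top)

lemma continuous_map_MU_top_shilkret_integral:
  "continuous_map X unit_interval \<phi> \<Longrightarrow> continuous_map (MU_top X) unit_interval (shilkret_integral X \<phi>)"
  unfolding MU_top_def by (rule continuous_map_from_subtopology[OF continuous_map_shilkret_integral])

lemma possibility_capacity_UN_eq:
  assumes C: "possibility_capacity X C" and "finite K" "K \<noteq> {}"
    and "\<And>k. k \<in> K \<Longrightarrow> closedin X (F k)"
  shows "\<exists>k\<in>K. C (\<Union>k\<in>K. F k) = C (F k)"
  using assms(2-)
proof (induction K rule: finite_ne_induct)
  case (singleton x)
  then show ?case by simp
next
  case (insert x K)
  then obtain k where k: "k \<in> K" "C (\<Union>k\<in>K. F k) = C (F k)"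
    by auto
  have "closedin X (\<Union>k\<in>K. F k)"
    using insert by (intro closedin_Union) auto
  then have "C (\<Union>k\<in>insert x K. F k) = max (C (F x)) (C (\<Union>k\<in>K. F k))"
    using C insert.prems unfolding possibility_capacity_def by simp
  then show ?case
    using k by (cases "C (F k) \<le> C (F x)") (auto simp: max_def)
qed

lemma MU_mu_closed:
  "closedin X F \<Longrightarrow> MU_mu X C F = (SUP s\<in>{0<..1}. C (level_set X F s) * s)"
  by (simp only: MU_mu_def Setcompr_eq_image if_True)

lemma level_set_empty: "1 < s \<Longrightarrow> level_set X F s = {}"
  by (auto simp: level_set_def dest!: in_MU_top_imp_capacity dest: capacity_le_one[where F=F])

lemma MU_mu_le:
  assumes "closedin X F" "\<And>s. s \<in> {0<..1} \<Longrightarrow> C (level_set X F s) * s \<le> B"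
  shows "MU_mu X C F \<le> B"
  unfolding MU_mu_closed[OF assms(1)] using assms(2) by (rule SUP_Ioc_least)

lemma level_set_mult_le_MU_mu:
  assumes C: "capacity (MU_top X) C" and F: "closedin X F" and "0 < s"
  shows "C (level_set X F s) * s \<le> MU_mu X C F"
proof -
  have upper: "C (level_set X F s) * s \<le> MU_mu X C F" if "s \<in> {0<..1}" for s
    unfolding MU_mu_closed[OF F]
    by (rule SUP_Ioc_upper[OF _ that]) (auto intro: mult_le_one_if_le_one capacity_le_one[OF C])
  show ?thesis
  proof (cases "s \<le> 1")
    case True
    then show ?thesis using upper \<open>0 < s\<close> by simp
  next
    case False
    then have "C (level_set X F s) * s = 0"
      using capacity_empty[OF C] by (simp add: level_set_empty)
    also have "\<dots> \<le> MU_mu X C F"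
      using upper[of 1] capacity_nonneg[OF C, of "level_set X F 1"] by simp
    finally show ?thesis .
  qed
qed

lemma MU_mu_le_one:
  assumes "capacity (MU_top X) C"
  shows "MU_mu X C F \<le> 1"
proof (cases "closedin X F")
  case True
  then show ?thesis
    by (rule MU_mu_le) (auto intro: mult_le_one_if_le_one capacity_le_one[OF assms])
next
  case False
  then show ?thesis by (simp add: MU_mu_def)
qed

lemma level_set_subset_superlevel_shilkret_integral:
  assumes t: "t \<in> {0<..1}"
  shows "level_set X (superlevel X \<phi> t) s
           \<subseteq> superlevel (MU_top X) (shilkret_integral X \<phi>) (s * t)"
proof
  fix c assume "c \<in> level_set X (superlevel X \<phi> t) s"
  then have c: "c \<in> topspace (MU_top X)" "s \<le> c (superlevel X \<phi> t)"
    by (auto simp: level_set_def)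
  have "s * t \<le> c (superlevel X \<phi> t) * t"
    using c(2) t by (intro mult_right_mono) auto
  also have "\<dots> \<le> shilkret_integral X \<phi> c"
    using t by (intro le_shilkret_integral capacity_le_one[OF in_MU_top_imp_capacity[OF c(1)]])
  finally show "c \<in> superlevel (MU_top X) (shilkret_integral X \<phi>) (s * t)"
    using c(1) by (simp add: superlevel_def)
qed

lemma shilkret_integral_MU_mu_le:
  assumes \<phi>: "continuous_map X unit_interval \<phi>" and C: "capacity (MU_top X) C"
  shows "shilkret_integral X \<phi> (MU_mu X C)
           \<le> shilkret_integral (MU_top X) (shilkret_integral X \<phi>) C"
    (is "_ \<le> ?P")
proof (rule shilkret_integral_le)
  fix t :: real assume t: "t \<in> {0<..1}"
  have "MU_mu X C (superlevel X \<phi> t) \<le> ?P / t"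
  proof (rule MU_mu_le)
    show "closedin X (superlevel X \<phi> t)"
      by (rule closedin_superlevel[OF \<phi>])
    fix s :: real assume s: "s \<in> {0<..1}"
    then have st: "s * t \<in> {0<..1}"
      using t by (auto simp: mult_le_one)
    have "C (level_set X (superlevel X \<phi> t) s) \<le>
            C (superlevel (MU_top X) (shilkret_integral X \<phi>) (s * t))"
      by (intro capacity_mono[OF C] closedin_level_set closedin_superlevel \<phi>
          continuous_map_MU_top_shilkret_integral level_set_subset_superlevel_shilkret_integral t)
    then have "C (level_set X (superlevel X \<phi> t) s) * (s * t)
                 \<le> C (superlevel (MU_top X) (shilkret_integral X \<phi>) (s * t)) * (s * t)"
      using st by (intro mult_right_mono) auto
    also have "\<dots> \<le> ?P"
      using st by (intro le_shilkret_integral capacity_le_one[OF C])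
    finally show "C (level_set X (superlevel X \<phi> t) s) * s \<le> ?P / t"
      using t by (simp add: pos_le_divide_eq mult.assoc)
  qed
  then show "MU_mu X C (superlevel X \<phi> t) * t \<le> ?P"
    using t by (simp add: pos_le_divide_eq)
qed

lemma superlevel_shilkret_integral_subset_UN_level_set:
  assumes \<phi>: "continuous_map X unit_interval \<phi>" and N: "0 < N"
  shows "superlevel (MU_top X) (shilkret_integral X \<phi>) r \<subseteq>
           (\<Union>k\<in>{1..N}. level_set X (superlevel X \<phi> (real k / real N))
                                   ((r - 2 / real N) / (real k / real N)))"
proof
  fix c assume "c \<in> superlevel (MU_top X) (shilkret_integral X \<phi>) r"
  then have c: "c \<in> topspace (MU_top X)" "r \<le> shilkret_integral X \<phi> c"
    by (auto simp: superlevel_def)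
  have "\<exists>k\<in>{1..N}. r - 2 / real N < c (superlevel X \<phi> (real k / real N)) * (real k / real N)"
  proof (rule ccontr)
    assume "\<not> ?thesis"
    then have "shilkret_integral X \<phi> c \<le> r - 2 / real N + 1 / real N"
      by (intro shilkret_integral_le_grid[OF \<phi> in_MU_top_imp_capacity[OF c(1)] N]) (auto simp: not_less)
    moreover have "0 < 1 / real N"
      using N by simp
    ultimately show False
      using c(2) by linarith
  qed
  then obtain k where k: "k \<in> {1..N}"
    "r - 2 / real N < c (superlevel X \<phi> (real k / real N)) * (real k / real N)"
    by blast
  moreover have "0 < real k / real N"
    using k(1) N by auto
  ultimately have "(r - 2 / real N) / (real k / real N) \<le> c (superlevel X \<phi> (real k / real N))"
    by (simp only: pos_divide_le_eq less_imp_le)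
  then show "c \<in> (\<Union>k\<in>{1..N}. level_set X (superlevel X \<phi> (real k / real N))
                                   ((r - 2 / real N) / (real k / real N)))"
    using c(1) k(1) by (auto simp: level_set_def)
qed

lemma mult_superlevel_shilkret_integral_le_MU_mu:
  assumes \<phi>: "continuous_map X unit_interval \<phi>" and C: "C \<in> topspace (MU_top (MU_top X))"
    and N: "0 < N" "2 / real N < r"
  shows "C (superlevel (MU_top X) (shilkret_integral X \<phi>) r) * (r - 2 / real N)
           \<le> shilkret_integral X \<phi> (MU_mu X C)"
proof -
  let ?p = "\<lambda>k. real k / real N"
  let ?L = "\<lambda>k. level_set X (superlevel X \<phi> (?p k)) ((r - 2 / real N) / ?p k)"
  have "possibility_capacity (MU_top X) C" and capC: "capacity (MU_top X) C"
    using C by (simp_all add: topspace_MU_top possibility_capacity_def)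
  have closed_L: "closedin (MU_top X) (?L k)" for k
    by (intro closedin_level_set closedin_superlevel[OF \<phi>])
  obtain k where k: "k \<in> {1..N}" "C (\<Union>k\<in>{1..N}. ?L k) = C (?L k)"
    using possibility_capacity_UN_eq[OF \<open>possibility_capacity (MU_top X) C\<close>, of "{1..N}" ?L]
      closed_L N by auto
  have p: "0 < ?p k" "?p k \<le> 1"
    using k(1) by auto
  have "closedin (MU_top X) (\<Union>k\<in>{1..N}. ?L k)"
    by (intro closedin_Union finite_imageI finite_atLeastAtMost) (use closed_L in blast)
  then have "C (superlevel (MU_top X) (shilkret_integral X \<phi>) r) \<le> C (?L k)"
    unfolding k(2)[symmetric]
    by (intro capacity_mono[OF capC] closedin_superlevel continuous_map_MU_top_shilkret_integral \<phi>
        superlevel_shilkret_integral_subset_UN_level_set N(1))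
  then have "C (superlevel (MU_top X) (shilkret_integral X \<phi>) r) * (r - 2 / real N)
               \<le> C (?L k) * (r - 2 / real N)"
    using N by (intro mult_right_mono) auto
  also have "\<dots> = C (?L k) * ((r - 2 / real N) / ?p k) * ?p k"
    using k(1) N(1) by simp
  also have "\<dots> \<le> MU_mu X C (superlevel X \<phi> (?p k)) * ?p k"
    using N k(1) p by (intro mult_right_mono level_set_mult_le_MU_mu[OF capC]
        closedin_superlevel[OF \<phi>] divide_pos_pos) auto
  also have "\<dots> \<le> shilkret_integral X \<phi> (MU_mu X C)"
    using p by (intro le_shilkret_integral MU_mu_le_one[OF capC]) auto
  finally show ?thesis .
qed

lemma shilkret_integral_MU_mu:
  assumes \<phi>: "continuous_map X unit_interval \<phi>" and C: "C \<in> topspace (MU_top (MU_top X))"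
  shows "shilkret_integral (MU_top X) (shilkret_integral X \<phi>) C = shilkret_integral X \<phi> (MU_mu X C)"
proof (rule antisym)
  have capC: "capacity (MU_top X) C"
    using C by (rule in_MU_top_imp_capacity)
  show "shilkret_integral (MU_top X) (shilkret_integral X \<phi>) C \<le> shilkret_integral X \<phi> (MU_mu X C)"
  proof (rule shilkret_integral_le)
    fix r :: real assume r: "r \<in> {0<..1}"
    let ?S = "C (superlevel (MU_top X) (shilkret_integral X \<phi>) r)"
    show "?S * r \<le> shilkret_integral X \<phi> (MU_mu X C)"
    proof (rule field_le_epsilon)
      fix e :: real assume "0 < e"
      obtain N :: nat where N: "0 < N" "2 / real N < min e r"
        using ex_nat_divide_less[of "min e r"] \<open>0 < e\<close> r by auto
      have "?S * (2 / real N) \<le> 2 / real N"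
        using capacity_le_one[OF capC] capacity_nonneg[OF capC] by (intro mult_left_le_one_le) auto
      then have "?S * r \<le> ?S * (r - 2 / real N) + 2 / real N"
        by (simp add: right_diff_distrib)
      also have "\<dots> \<le> shilkret_integral X \<phi> (MU_mu X C) + e"
        using mult_superlevel_shilkret_integral_le_MU_mu[OF \<phi> C N(1)] N(2) by fastforce
      finally show "?S * r \<le> shilkret_integral X \<phi> (MU_mu X C) + e" .
    qed
  qed
  show "shilkret_integral X \<phi> (MU_mu X C) \<le> shilkret_integral (MU_top X) (shilkret_integral X \<phi>) C"
    by (rule shilkret_integral_MU_mu_le[OF \<phi> capC])
qed

lemma xi_eq_shilkret_integral: "xi = shilkret_integral unit_interval id"
proof
  fix \<nu> :: "real set \<Rightarrow> real"
  have "superlevel unit_interval id t = {t..1}" if "0 \<le> t" for t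
    using that by (auto simp: superlevel_def unit_interval_def)
  then have "(\<lambda>t. \<nu> {t..1} * t) ` {0<..1} = (\<lambda>t. \<nu> (superlevel unit_interval id t) * t) ` {0<..1}"
    by (intro image_cong) auto
  then show "xi \<nu> = shilkret_integral unit_interval id \<nu>"
    by (simp only: xi_def shilkret_integral_def Setcompr_eq_image)
qed

lemma xi_MU_eta:
  assumes x: "x \<in> {0..1}"
  shows "xi (MU_eta unit_interval x) = x"
proof -
  have eta: "MU_eta unit_interval x (superlevel unit_interval id t) = (if t \<le> x then 1 else 0)"
    if "t \<in> {0<..1}" for t
    using closedin_superlevel[OF continuous_map_id[of unit_interval], of t] x
    by (auto simp: MU_eta_def superlevel_def unit_interval_def)
  have le_one: "MU_eta unit_interval x F \<le> 1" for F
    by (simp add: MU_eta_def)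
  show ?thesis
    unfolding xi_eq_shilkret_integral
  proof (rule antisym)
    show "shilkret_integral unit_interval id (MU_eta unit_interval x) \<le> x"
      using x by (intro shilkret_integral_le) (auto simp: eta)
    have "MU_eta unit_interval x (superlevel unit_interval id 1) * 1
            \<le> shilkret_integral unit_interval id (MU_eta unit_interval x)"
      by (intro le_shilkret_integral le_one) auto
    then have "0 \<le> shilkret_integral unit_interval id (MU_eta unit_interval x)"
      by (auto simp: MU_eta_def split: if_splits)
    moreover have "x \<le> shilkret_integral unit_interval id (MU_eta unit_interval x)" if "0 < x"
    proof -
      have "MU_eta unit_interval x (superlevel unit_interval id x) * x
              \<le> shilkret_integral unit_interval id (MU_eta unit_interval x)"
        using that x by (intro le_shilkret_integral le_one) auto
      then show ?thesis
        using eta[of x] that x by simp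
    qed
    ultimately show "x \<le> shilkret_integral unit_interval id (MU_eta unit_interval x)"
      using x by (cases "0 < x") auto
  qed
qed

lemma shilkret_integral_separates_less:
  assumes X: "normal_space X" and c: "capacity X c" and d: "capacity X d"
    and F: "closedin X F" and less: "c F < d F"
  obtains \<phi> where "continuous_map X unit_interval \<phi>"
    "shilkret_integral X \<phi> c < shilkret_integral X \<phi> d"
proof -
  define a where "a = (c F + d F) / 2"
  have "c F < a" "a < d F"
    using less by (auto simp: a_def)
  obtain W where W: "openin X W" "F \<subseteq> W"
    and small: "\<And>B. closedin X B \<Longrightarrow> B \<subseteq> W \<Longrightarrow> c B < a"
    using capacity_upper_semicontinuous[OF c F \<open>c F < a\<close>] by blast
  have "closedin X (topspace X - W)"
    using W(1) by (rule closedin_diff[OF closedin_topspace])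
  moreover have "disjnt (topspace X - W) F"
    using W(2) by (auto simp: disjnt_def)
  ultimately obtain f :: "'a \<Rightarrow> real" where f: "continuous_map X (top_of_set {0..1}) f"
    "f ` (topspace X - W) \<subseteq> {0}" "f ` F \<subseteq> {1}"
    using normal_space_iff_Urysohn[THEN iffD1, OF X, rule_format, of "topspace X - W" F] F
    by blast
  then have f_cont: "continuous_map X unit_interval f"
    by (simp add: unit_interval_def)
  have "F \<subseteq> superlevel X f 1"
    using f(3) closedin_subset[OF F] by (auto simp: superlevel_def image_subset_iff)
  have "shilkret_integral X f c \<le> a"
  proof (rule shilkret_integral_le)
    fix t :: real assume t: "t \<in> {0<..1}"
    have "superlevel X f t \<subseteq> W"
      using f(2) t by (force simp: superlevel_def image_subset_iff)
    then have "c (superlevel X f t) < a"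
      by (intro small closedin_superlevel[OF f_cont])
    moreover have "c (superlevel X f t) * t \<le> c (superlevel X f t)"
      using t capacity_nonneg[OF c] by (simp add: mult_left_le)
    ultimately show "c (superlevel X f t) * t \<le> a" by linarith
  qed
  also have "a < d F" by fact
  also have "d F \<le> d (superlevel X f 1) * 1"
    using \<open>F \<subseteq> superlevel X f 1\<close> by (simp add: capacity_mono[OF d F closedin_superlevel[OF f_cont]])
  also have "\<dots> \<le> shilkret_integral X f d"
    by (intro le_shilkret_integral capacity_le_one[OF d]) auto
  finally show ?thesis
    using f_cont that by blast
qed

lemma shilkret_integrals_separate_capacities:
  assumes X: "normal_space X" and c: "capacity X c" and d: "capacity X d" and "c \<noteq> d"
  obtains \<phi> where "continuous_map X unit_interval \<phi>"
    "shilkret_integral X \<phi> c \<noteq> shilkret_integral X \<phi> d"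
proof -
  obtain F where F: "c F \<noteq> d F"
    using \<open>c \<noteq> d\<close> by blast
  have "closedin X F"
  proof (rule ccontr)
    assume "\<not> closedin X F"
    then have "c F = 0" "d F = 0"
      using c d by (simp_all add: capacity_def)
    with F show False by simp
  qed
  consider "c F < d F" | "d F < c F"
    using F by linarith
  then show ?thesis
  proof cases
    case 1
    then obtain \<phi> where "continuous_map X unit_interval \<phi>"
      "shilkret_integral X \<phi> c < shilkret_integral X \<phi> d"
      by (rule shilkret_integral_separates_less[OF X c d \<open>closedin X F\<close>])
    then show ?thesis by (intro that) auto
  next
    case 2
    then obtain \<phi> where "continuous_map X unit_interval \<phi>"
      "shilkret_integral X \<phi> d < shilkret_integral X \<phi> c"
      by (rule shilkret_integral_separates_less[OF X d c \<open>closedin X F\<close>])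
    then show ?thesis by (intro that) auto
  qed
qed

theorem theorem2:
  fixes X :: "'a topology"
  shows
   "(continuous_map (MU_top unit_interval) unit_interval xi \<and>
     (\<forall>x\<in>{0..1::real}. xi (MU_eta unit_interval x) = x) \<and>
     (\<forall>C\<in>topspace (MU_top (MU_top unit_interval)).
        xi (MU_mu unit_interval C) = xi (MU_map (MU_top unit_interval) unit_interval xi C)))
    \<and>
    (compactum X \<longrightarrow>
      (\<forall>\<phi>. continuous_map X unit_interval \<phi> \<longrightarrow>
         continuous_map (MU_top X) unit_interval (xi \<circ> MU_map X unit_interval \<phi>) \<and>
         (\<forall>C\<in>topspace (MU_top (MU_top X)).
            xi (MU_map (MU_top X) unit_interval (xi \<circ> MU_map X unit_interval \<phi>) C)
            = (xi \<circ> MU_map X unit_interval \<phi>) (MU_mu X C))) \<and>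
      (\<forall>c\<in>topspace (MU_top X). \<forall>d\<in>topspace (MU_top X). c \<noteq> d \<longrightarrow>
         (\<exists>\<phi>. continuous_map X unit_interval \<phi> \<and>
              (xi \<circ> MU_map X unit_interval \<phi>) c \<noteq> (xi \<circ> MU_map X unit_interval \<phi>) d)))"
proof (intro conjI impI allI ballI)
  show xi_cont: "continuous_map (MU_top unit_interval) unit_interval xi"
    unfolding xi_eq_shilkret_integral by (intro continuous_map_MU_top_shilkret_integral continuous_map_id)
  show "xi (MU_eta unit_interval x) = x" if "x \<in> {0..1}" for x
    using that by (rule xi_MU_eta)
  show "xi (MU_mu unit_interval C) = xi (MU_map (MU_top unit_interval) unit_interval xi C)"
    if "C \<in> topspace (MU_top (MU_top unit_interval))" for C
    using shilkret_integral_MU_mu[OF continuous_map_id that] xi_comp_MU_map[OF xi_cont]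
    by (simp add: xi_eq_shilkret_integral fun_eq_iff)
  fix \<phi> assume \<phi>: "continuous_map X unit_interval \<phi>"
  show "continuous_map (MU_top X) unit_interval (xi \<circ> MU_map X unit_interval \<phi>)"
    unfolding xi_comp_MU_map[OF \<phi>] by (rule continuous_map_MU_top_shilkret_integral[OF \<phi>])
  show "xi (MU_map (MU_top X) unit_interval (xi \<circ> MU_map X unit_interval \<phi>) C)
          = (xi \<circ> MU_map X unit_interval \<phi>) (MU_mu X C)"
    if "C \<in> topspace (MU_top (MU_top X))" for C
    using shilkret_integral_MU_mu[OF \<phi> that]
      xi_comp_MU_map[OF continuous_map_MU_top_shilkret_integral[OF \<phi>]]
    by (simp add: xi_comp_MU_map[OF \<phi>] fun_eq_iff)
next
  fix c d assume "compactum X" "c \<in> topspace (MU_top X)" "d \<in> topspace (MU_top X)" "c \<noteq> d"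
  moreover have "normal_space X"
    using \<open>compactum X\<close> by (simp add: compactum_def compact_Hausdorff_or_regular_imp_normal_space)
  ultimately obtain \<phi> where \<phi>: "continuous_map X unit_interval \<phi>"
    "shilkret_integral X \<phi> c \<noteq> shilkret_integral X \<phi> d"
    using shilkret_integrals_separate_capacities in_MU_top_imp_capacity by blast
  then show "\<exists>\<phi>. continuous_map X unit_interval \<phi> \<and>
               (xi \<circ> MU_map X unit_interval \<phi>) c \<noteq> (xi \<circ> MU_map X unit_interval \<phi>) d"
    by (intro exI[of _ \<phi>]) (simp add: xi_comp_MU_map)
qed

end
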